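(* Let $T$ be the monad on $\mathsf{Set}$ associated to a Mal'cev algebraic theory (so that $T$-algebras are the models of the theory). Then every $T$-algebra $(A,e)$ is indiscrete, and the partial evaluation relation on $TA$ is an equivalence relation.
   Context: A Mal'cev operation on a set $A$ is a ternary operation $m$ with $m(a,b,b)=a$ and $m(a,a,b)=b$ for all $a,b\in A$; a Mal'cev theory is an algebraic (Lawvere/equational) theory containing a ternary operation satisfying these identities. A $T$-algebra $(A,e)$ is indiscrete if for all $t_0,t_1\in TA$ with $e(t_0)=e(t_1)$ there is $\tau\in TTA$ with $\mu_A(\tau)=t_0$ and $(Te)(\tau)=t_1$ (i.e. the algebra square formed by $\mu_A,Te,e,e$ is a weak pullback). The partial evaluation relation on $TA$ consists of the pairs $(\mu_A(\tau),(Te)(\tau))$ for $\tau\in TTA$. *)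

theory Defs
  imports Main "HOL-Library.FuncSet"
begin

datatype ('f, 'v) trm = Var 'v | Fn 'f "('f, 'v) trm list"

fun wf_trm :: "('f \<Rightarrow> nat) \<Rightarrow> 'v set \<Rightarrow> ('f, 'v) trm \<Rightarrow> bool" where
  "wf_trm ar V (Var v) = (v \<in> V)"
| "wf_trm ar V (Fn f ts) = (length ts = ar f \<and> (\<forall>t\<in>set ts. wf_trm ar V t))"

primrec tsubst :: "('v \<Rightarrow> ('f, 'w) trm) \<Rightarrow> ('f, 'v) trm \<Rightarrow> ('f, 'w) trm" where
  "tsubst \<sigma> (Var v) = \<sigma> v"
| "tsubst \<sigma> (Fn f ts) = Fn f (map (tsubst \<sigma>) ts)"

definition tmap :: "('v \<Rightarrow> 'w) \<Rightarrow> ('f, 'v) trm \<Rightarrow> ('f, 'w) trm" where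
  "tmap g = tsubst (Var \<circ> g)"

definition eq_theory :: "('f \<Rightarrow> nat) \<Rightarrow> (('f, nat) trm \<times> ('f, nat) trm) set \<Rightarrow> bool" where
  "eq_theory ar E \<longleftrightarrow> (\<forall>(l, r)\<in>E. wf_trm ar UNIV l \<and> wf_trm ar UNIV r)"

inductive eqv :: "('f \<Rightarrow> nat) \<Rightarrow> (('f, nat) trm \<times> ('f, nat) trm) set \<Rightarrow> 'v set
                   \<Rightarrow> ('f, 'v) trm \<Rightarrow> ('f, 'v) trm \<Rightarrow> bool"
  for ar E V where
  refl: "wf_trm ar V t \<Longrightarrow> eqv ar E V t t"
| sym: "eqv ar E V s t \<Longrightarrow> eqv ar E V t s"
| trans: "eqv ar E V s t \<Longrightarrow> eqv ar E V t u \<Longrightarrow> eqv ar E V s u"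
| cong: "length ss = ar f \<Longrightarrow> list_all2 (eqv ar E V) ss ts \<Longrightarrow> eqv ar E V (Fn f ss) (Fn f ts)"
| ax: "(l, r) \<in> E \<Longrightarrow> (\<forall>i. wf_trm ar V (\<sigma> i)) \<Longrightarrow> eqv ar E V (tsubst \<sigma> l) (tsubst \<sigma> r)"

text \<open>The theory is Mal'cev: some ternary derived operation p satisfies
  p(x,y,y) = x and p(x,x,y) = y (variables x = 0, y = 1, p in variables 0,1,2).\<close>
definition malcev_theory :: "('f \<Rightarrow> nat) \<Rightarrow> (('f, nat) trm \<times> ('f, nat) trm) set \<Rightarrow> bool" where
  "malcev_theory ar E \<longleftrightarrow>
     (\<exists>p :: ('f, nat) trm. wf_trm ar {0, 1, 2} p
        \<and> eqv ar E UNIV (tsubst (\<lambda>i. [Var 0, Var 1, Var 1] ! i :: ('f, nat) trm) p) (Var 0)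
        \<and> eqv ar E UNIV (tsubst (\<lambda>i. [Var 0, Var 0, Var 1] ! i :: ('f, nat) trm) p) (Var 1))"

text \<open>TA: the free algebra on the set A, i.e. derivable-equality classes of
  well-formed terms over A.\<close>
definition cls :: "('f \<Rightarrow> nat) \<Rightarrow> (('f, nat) trm \<times> ('f, nat) trm) set \<Rightarrow> 'v set
                   \<Rightarrow> ('f, 'v) trm \<Rightarrow> ('f, 'v) trm set" where
  "cls ar E A t = {s. eqv ar E A t s}"

definition TT :: "('f \<Rightarrow> nat) \<Rightarrow> (('f, nat) trm \<times> ('f, nat) trm) set \<Rightarrow> 'v set
                  \<Rightarrow> ('f, 'v) trm set set" where
  "TT ar E A = {cls ar E A t | t. wf_trm ar A t}"

definition eta :: "('f \<Rightarrow> nat) \<Rightarrow> (('f, nat) trm \<times> ('f, nat) trm) set \<Rightarrow> 'v set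
                   \<Rightarrow> 'v \<Rightarrow> ('f, 'v) trm set" where
  "eta ar E A a = cls ar E A (Var a)"

definition Tmap :: "('f \<Rightarrow> nat) \<Rightarrow> (('f, nat) trm \<times> ('f, nat) trm) set \<Rightarrow> 'w set
                    \<Rightarrow> ('v \<Rightarrow> 'w) \<Rightarrow> ('f, 'v) trm set \<Rightarrow> ('f, 'w) trm set" where
  "Tmap ar E B g X = cls ar E B (tmap g (SOME s. s \<in> X))"

definition mu :: "('f \<Rightarrow> nat) \<Rightarrow> (('f, nat) trm \<times> ('f, nat) trm) set \<Rightarrow> 'v set
                  \<Rightarrow> ('f, ('f, 'v) trm set) trm set \<Rightarrow> ('f, 'v) trm set" where
  "mu ar E A X = cls ar E A (tsubst (\<lambda>c. SOME t. t \<in> c) (SOME s. s \<in> X))"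

definition T_algebra :: "('f \<Rightarrow> nat) \<Rightarrow> (('f, nat) trm \<times> ('f, nat) trm) set \<Rightarrow> 'v set
                         \<Rightarrow> (('f, 'v) trm set \<Rightarrow> 'v) \<Rightarrow> bool" where
  "T_algebra ar E A e \<longleftrightarrow>
     e \<in> TT ar E A \<rightarrow> A
     \<and> (\<forall>a\<in>A. e (eta ar E A a) = a)
     \<and> (\<forall>X\<in>TT ar E (TT ar E A). e (mu ar E A X) = e (Tmap ar E A e X))"

definition indiscrete :: "('f \<Rightarrow> nat) \<Rightarrow> (('f, nat) trm \<times> ('f, nat) trm) set \<Rightarrow> 'v set
                          \<Rightarrow> (('f, 'v) trm set \<Rightarrow> 'v) \<Rightarrow> bool" where
  "indiscrete ar E A e \<longleftrightarrow>
     (\<forall>t0\<in>TT ar E A. \<forall>t1\<in>TT ar E A. e t0 = e t1 \<longrightarrow>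
        (\<exists>\<tau>\<in>TT ar E (TT ar E A). mu ar E A \<tau> = t0 \<and> Tmap ar E A e \<tau> = t1))"

definition partial_eval :: "('f \<Rightarrow> nat) \<Rightarrow> (('f, nat) trm \<times> ('f, nat) trm) set \<Rightarrow> 'v set
                            \<Rightarrow> (('f, 'v) trm set \<Rightarrow> 'v) \<Rightarrow> (('f, 'v) trm set \<times> ('f, 'v) trm set) set" where
  "partial_eval ar E A e = {(mu ar E A \<tau>, Tmap ar E A e \<tau>) | \<tau>. \<tau> \<in> TT ar E (TT ar E A)}"

end

theory Submission
  imports Defs
begin

text \<open>Let \<open>p\<close> be a Mal'cev term and let \<open>t\<^sub>0, t\<^sub>1 \<in> TA\<close> with \<open>e t\<^sub>0 = e t\<^sub>1 = a\<close>.
  The element \<open>\<tau> = p(\<eta> t\<^sub>0, \<eta> t\<^sub>1, T\<eta> t\<^sub>1)\<close> of \<open>TTA\<close> flattens to \<open>p(t\<^sub>0, t\<^sub>1, t\<^sub>1) = t\<^sub>0\<close>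
  and is evaluated by \<open>Te\<close> to \<open>p(a, a, t\<^sub>1) = t\<^sub>1\<close>; so every algebra is indiscrete.
  The associativity law of the algebra puts the partial evaluation relation inside the
  kernel of \<open>e\<close>, and indiscreteness is the reverse inclusion, so the relation is the
  kernel of \<open>e\<close> on \<open>TA\<close>, an equivalence relation.\<close>

lemma wf_trm_tsubst:
  "wf_trm ar V s \<Longrightarrow> (\<forall>v\<in>V. wf_trm ar W (\<sigma> v)) \<Longrightarrow> wf_trm ar W (tsubst \<sigma> s)"
  by (induction s) auto

lemma tsubst_cong:
  "wf_trm ar V s \<Longrightarrow> (\<forall>v\<in>V. \<sigma> v = \<sigma>' v) \<Longrightarrow> tsubst \<sigma> s = tsubst \<sigma>' s"
  by (induction s) auto

lemma tsubst_tsubst: "tsubst \<sigma> (tsubst \<tau> s) = tsubst (tsubst \<sigma> \<circ> \<tau>) s"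
  by (induction s) auto

lemma tsubst_Var: "tsubst Var s = s"
  by (induction s) (auto intro: map_idI)

lemma tmap_tmap_inverse:
  assumes "wf_trm ar A r" and "\<forall>a\<in>A. g (f a) = a"
  shows "tmap g (tmap f r) = r"
proof -
  have "tmap g (tmap f r) = tsubst (\<lambda>a. Var (g (f a))) r"
    unfolding tmap_def tsubst_tsubst by (simp add: comp_def)
  also have "\<dots> = tsubst Var r"
    using assms by (intro tsubst_cong[OF assms(1)]) auto
  finally show ?thesis
    by (simp add: tsubst_Var)
qed

lemma eqv_wf_trm:
  assumes "eq_theory ar E"
  shows "eqv ar E V s t \<Longrightarrow> wf_trm ar V s \<and> wf_trm ar V t"
proof (induction rule: eqv.induct)
  case (cong ss f ts)
  then show ?case
    by (auto simp: list_all2_conv_all_nth in_set_conv_nth)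
next
  case (ax l r \<sigma>)
  then show ?case
    using assms unfolding eq_theory_def by (auto intro!: wf_trm_tsubst[where V=UNIV])
qed auto

lemma eqv_tsubst:
  "eqv ar E V s t \<Longrightarrow> (\<forall>v\<in>V. wf_trm ar W (\<sigma> v)) \<Longrightarrow>
   eqv ar E W (tsubst \<sigma> s) (tsubst \<sigma> t)"
proof (induction rule: eqv.induct)
  case (refl t)
  then show ?case
    by (auto intro!: eqv.refl wf_trm_tsubst)
next
  case (sym s t)
  then show ?case
    by (auto intro: eqv.sym)
next
  case (trans s t u)
  then show ?case
    by (auto intro: eqv.trans)
next
  case (cong ss f ts)
  then show ?case
    by (auto intro!: eqv.cong simp: list_all2_conv_all_nth)
next
  case (ax l r \<tau>)
  have "eqv ar E W (tsubst (tsubst \<sigma> \<circ> \<tau>) l) (tsubst (tsubst \<sigma> \<circ> \<tau>) r)"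
    using ax by (intro eqv.ax) (auto intro: wf_trm_tsubst)
  then show ?case
    by (simp add: tsubst_tsubst)
qed

lemma eqv_tsubst_cong:
  "wf_trm ar V s \<Longrightarrow> (\<forall>v\<in>V. eqv ar E W (\<sigma> v) (\<sigma>' v)) \<Longrightarrow>
   eqv ar E W (tsubst \<sigma> s) (tsubst \<sigma>' s)"
  by (induction s) (auto intro!: eqv.cong simp: list_all2_conv_all_nth)

declare eqv.trans [trans]

lemma cls_eqI: "eqv ar E V s t \<Longrightarrow> cls ar E V s = cls ar E V t"
  unfolding cls_def by (auto intro: eqv.sym eqv.trans)

lemma eqv_some_cls: "wf_trm ar A r \<Longrightarrow> eqv ar E A r (SOME t. t \<in> cls ar E A r)"
  using someI[of "\<lambda>t. t \<in> cls ar E A r" r] unfolding cls_def by (auto intro: eqv.refl)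

lemma cls_in_TT: "wf_trm ar A r \<Longrightarrow> cls ar E A r \<in> TT ar E A"
  unfolding TT_def by blast

lemma TT_E:
  assumes "c \<in> TT ar E A"
  obtains r where "wf_trm ar A r" and "c = cls ar E A r"
  using assms unfolding TT_def by blast

lemma wf_trm_some_TT:
  assumes "eq_theory ar E" and "c \<in> TT ar E A"
  shows "wf_trm ar A (SOME t. t \<in> c)"
  using assms(2) by (elim TT_E) (use eqv_some_cls eqv_wf_trm[OF assms(1)] in blast)

lemma mu_cls:
  assumes "eq_theory ar E" and "wf_trm ar (TT ar E A) s"
  shows "mu ar E A (cls ar E (TT ar E A) s) = cls ar E A (tsubst (\<lambda>c. SOME t. t \<in> c) s)"
proof -
  let ?s' = "SOME s'. s' \<in> cls ar E (TT ar E A) s"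
  have "eqv ar E A (tsubst (\<lambda>c. SOME t. t \<in> c) s) (tsubst (\<lambda>c. SOME t. t \<in> c) ?s')"
    using eqv_tsubst[OF eqv_some_cls[OF assms(2), where E=E], of A "\<lambda>c. SOME t. t \<in> c"]
      wf_trm_some_TT[OF assms(1)] by blast
  then show ?thesis
    unfolding mu_def by (simp add: cls_eqI)
qed

lemma Tmap_cls:
  assumes "wf_trm ar V s" and "\<forall>v\<in>V. g v \<in> B"
  shows "Tmap ar E B g (cls ar E V s) = cls ar E B (tmap g s)"
proof -
  let ?s' = "SOME s'. s' \<in> cls ar E V s"
  have "eqv ar E B (tmap g s) (tmap g ?s')"
    unfolding tmap_def using eqv_tsubst[OF eqv_some_cls[OF assms(1), where E=E], of B "Var \<circ> g"] assms(2)
    by simp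
  then show ?thesis
    unfolding Tmap_def by (simp add: cls_eqI)
qed

lemma mu_in_TT:
  assumes "eq_theory ar E" and "\<tau> \<in> TT ar E (TT ar E A)"
  shows "mu ar E A \<tau> \<in> TT ar E A"
  using assms(2)
proof (rule TT_E)
  fix s assume s: "wf_trm ar (TT ar E A) s" and \<tau>: "\<tau> = cls ar E (TT ar E A) s"
  have "wf_trm ar A (tsubst (\<lambda>c. SOME t. t \<in> c) s)"
    by (rule wf_trm_tsubst[OF s]) (simp add: wf_trm_some_TT[OF assms(1)])
  then show ?thesis
    by (simp add: \<tau> mu_cls[OF assms(1) s] cls_in_TT)
qed

lemma Tmap_in_TT:
  assumes "\<tau> \<in> TT ar E V" and "\<forall>v\<in>V. g v \<in> B"
  shows "Tmap ar E B g \<tau> \<in> TT ar E B"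
  using assms(1)
proof (rule TT_E)
  fix s assume s: "wf_trm ar V s" and \<tau>: "\<tau> = cls ar E V s"
  have "wf_trm ar B (tmap g s)"
    unfolding tmap_def using assms(2) by (intro wf_trm_tsubst[OF s]) simp
  then show ?thesis
    by (simp add: \<tau> Tmap_cls[OF s assms(2)] cls_in_TT)
qed

text \<open>The monad law \<open>\<mu> \<circ> T\<eta> = id\<close>, read on representatives.\<close>

lemma eqv_tsubst_some_tmap_eta:
  assumes "wf_trm ar A r"
  shows "eqv ar E A (tsubst (\<lambda>c. SOME t. t \<in> c) (tmap (eta ar E A) r)) r"
proof -
  have "eqv ar E A (tsubst (\<lambda>a. SOME t. t \<in> eta ar E A a) r) (tsubst Var r)"
    unfolding eta_def by (intro eqv_tsubst_cong[OF assms]) (auto intro: eqv_some_cls[THEN eqv.sym])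
  then show ?thesis
    unfolding tmap_def tsubst_tsubst by (simp add: comp_def tsubst_Var)
qed

text \<open>The substitution takes junk values outside \<open>{0, 1, 2}\<close>; this is harmless since
  \<open>p\<close> is always well-formed over \<open>{0, 1, 2}\<close>.\<close>

definition trm_app3 :: "('f, nat) trm \<Rightarrow> ('f, 'v) trm \<Rightarrow> ('f, 'v) trm \<Rightarrow> ('f, 'v) trm
                        \<Rightarrow> ('f, 'v) trm" where
  "trm_app3 p x y z = tsubst (\<lambda>i. [x, y, z] ! i) p"

lemma wf_trm_app3:
  "wf_trm ar {0, 1, 2} p \<Longrightarrow> wf_trm ar V x \<Longrightarrow> wf_trm ar V y \<Longrightarrow> wf_trm ar V z \<Longrightarrow>
   wf_trm ar V (trm_app3 p x y z)"
  unfolding trm_app3_def by (rule wf_trm_tsubst) auto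

lemma tsubst_trm_app3:
  "wf_trm ar {0, 1, 2} p \<Longrightarrow>
   tsubst \<sigma> (trm_app3 p x y z) = trm_app3 p (tsubst \<sigma> x) (tsubst \<sigma> y) (tsubst \<sigma> z)"
  unfolding trm_app3_def tsubst_tsubst by (rule tsubst_cong) auto

lemma eqv_trm_app3_cong:
  "wf_trm ar {0, 1, 2} p \<Longrightarrow> eqv ar E V x x' \<Longrightarrow> eqv ar E V y y' \<Longrightarrow> eqv ar E V z z' \<Longrightarrow>
   eqv ar E V (trm_app3 p x y z) (trm_app3 p x' y' z')"
  unfolding trm_app3_def by (rule eqv_tsubst_cong) auto

definition malcev_term :: "('f \<Rightarrow> nat) \<Rightarrow> (('f, nat) trm \<times> ('f, nat) trm) set \<Rightarrow> ('f, nat) trm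
                           \<Rightarrow> bool" where
  "malcev_term ar E p \<longleftrightarrow> wf_trm ar {0, 1, 2} p
     \<and> eqv ar E (UNIV :: nat set) (trm_app3 p (Var 0) (Var 1) (Var 1)) (Var 0)
     \<and> eqv ar E (UNIV :: nat set) (trm_app3 p (Var 0) (Var 0) (Var 1)) (Var 1)"

lemma malcev_theory_iff: "malcev_theory ar E \<longleftrightarrow> (\<exists>p. malcev_term ar E p)"
  by (simp add: malcev_theory_def malcev_term_def trm_app3_def)

lemma
  assumes "malcev_term ar E p" and "wf_trm ar V x" and "wf_trm ar V y"
  shows malcev_term_left: "eqv ar E V (trm_app3 p x y y) x"
    and malcev_term_right: "eqv ar E V (trm_app3 p x x y) y"
proof -
  define \<rho> where "\<rho> = (\<lambda>i::nat. if i = 0 then x else y)"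
  have \<rho>: "\<forall>i\<in>UNIV. wf_trm ar V (\<rho> i)"
    using assms(2,3) by (simp add: \<rho>_def)
  have p: "wf_trm ar {0, 1, 2} p"
    using assms(1) by (simp add: malcev_term_def)
  show "eqv ar E V (trm_app3 p x y y) x"
    using eqv_tsubst[OF _ \<rho>] assms(1)
    by (fastforce simp: malcev_term_def tsubst_trm_app3[OF p] \<rho>_def)
  show "eqv ar E V (trm_app3 p x x y) y"
    using eqv_tsubst[OF _ \<rho>] assms(1)
    by (fastforce simp: malcev_term_def tsubst_trm_app3[OF p] \<rho>_def)
qed

lemma indiscrete_if_malcev_term:
  assumes th: "eq_theory ar E" and p: "malcev_term ar E p" and alg: "T_algebra ar E A e"
  shows "indiscrete ar E A e"
  unfolding indiscrete_def
proof (intro ballI impI)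
  fix t\<^sub>0 t\<^sub>1 assume "t\<^sub>0 \<in> TT ar E A" and "t\<^sub>1 \<in> TT ar E A" and same_value: "e t\<^sub>0 = e t\<^sub>1"
  then obtain r\<^sub>0 r\<^sub>1 where r\<^sub>0: "wf_trm ar A r\<^sub>0" "t\<^sub>0 = cls ar E A r\<^sub>0"
    and r\<^sub>1: "wf_trm ar A r\<^sub>1" "t\<^sub>1 = cls ar E A r\<^sub>1"
    by (metis TT_E)
  have e: "\<forall>t\<in>TT ar E A. e t \<in> A" and e_eta: "\<forall>a\<in>A. e (eta ar E A a) = a"
    using alg by (auto simp: T_algebra_def)
  have p_wf: "wf_trm ar {0, 1, 2} p"
    using p by (simp add: malcev_term_def)
  let ?ch = "\<lambda>c. SOME t. t \<in> c"
  define s where "s = trm_app3 p (Var t\<^sub>0) (Var t\<^sub>1) (tmap (eta ar E A) r\<^sub>1)"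
  have "wf_trm ar (TT ar E A) (tmap (eta ar E A) r\<^sub>1)"
    unfolding tmap_def eta_def by (rule wf_trm_tsubst[OF r\<^sub>1(1)]) (simp add: cls_in_TT)
  then have s: "wf_trm ar (TT ar E A) s"
    unfolding s_def using \<open>t\<^sub>0 \<in> TT ar E A\<close> \<open>t\<^sub>1 \<in> TT ar E A\<close> by (intro wf_trm_app3 p_wf) simp_all
  have "mu ar E A (cls ar E (TT ar E A) s) = t\<^sub>0"
  proof -
    have "tsubst ?ch s = trm_app3 p (?ch t\<^sub>0) (?ch t\<^sub>1) (tsubst ?ch (tmap (eta ar E A) r\<^sub>1))"
      unfolding s_def by (simp add: tsubst_trm_app3[OF p_wf])
    also have "eqv ar E A \<dots> (trm_app3 p r\<^sub>0 r\<^sub>1 r\<^sub>1)"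
      using r\<^sub>0 r\<^sub>1 by (intro eqv_trm_app3_cong[OF p_wf] eqv_tsubst_some_tmap_eta)
        (simp_all add: eqv_some_cls[THEN eqv.sym])
    also have "eqv ar E A \<dots> r\<^sub>0"
      by (rule malcev_term_left[OF p r\<^sub>0(1) r\<^sub>1(1)])
    finally show ?thesis
      by (simp add: mu_cls[OF th s] r\<^sub>0(2) cls_eqI)
  qed
  moreover have "Tmap ar E A e (cls ar E (TT ar E A) s) = t\<^sub>1"
  proof -
    have "tmap e s = trm_app3 p (Var (e t\<^sub>0)) (Var (e t\<^sub>1)) (tmap e (tmap (eta ar E A) r\<^sub>1))"
      unfolding s_def tmap_def by (simp add: tsubst_trm_app3[OF p_wf])
    also have "\<dots> = trm_app3 p (Var (e t\<^sub>0)) (Var (e t\<^sub>0)) r\<^sub>1"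
      using same_value tmap_tmap_inverse[OF r\<^sub>1(1), where g=e and f="eta ar E A"] e_eta by simp
    also have "eqv ar E A \<dots> r\<^sub>1"
      using e \<open>t\<^sub>0 \<in> TT ar E A\<close> by (intro malcev_term_right[OF p _ r\<^sub>1(1)]) simp
    finally show ?thesis
      by (simp add: Tmap_cls[OF s e] r\<^sub>1(2) cls_eqI)
  qed
  ultimately show "\<exists>\<tau>\<in>TT ar E (TT ar E A). mu ar E A \<tau> = t\<^sub>0 \<and> Tmap ar E A e \<tau> = t\<^sub>1"
    using cls_in_TT[OF s] by blast
qed

lemma partial_eval_eq_kernel:
  assumes "eq_theory ar E" and "T_algebra ar E A e" and "indiscrete ar E A e"
  shows "partial_eval ar E A e = Restr (kernel e) (TT ar E A)"
proof
  have e: "\<forall>t\<in>TT ar E A. e t \<in> A"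
    and assoc: "\<forall>\<tau>\<in>TT ar E (TT ar E A). e (mu ar E A \<tau>) = e (Tmap ar E A e \<tau>)"
    using assms(2) by (auto simp: T_algebra_def)
  show "partial_eval ar E A e \<subseteq> Restr (kernel e) (TT ar E A)"
    using assoc mu_in_TT[OF assms(1)] Tmap_in_TT[OF _ e]
    by (auto simp: partial_eval_def kernel_def)
  show "Restr (kernel e) (TT ar E A) \<subseteq> partial_eval ar E A e"
    using assms(3) by (auto simp: indiscrete_def partial_eval_def kernel_def)
qed

lemma equiv_Restr_kernel: "equiv S (Restr (kernel f) S)"
  by (auto intro!: equivI simp: kernel_def refl_on_def sym_def trans_def)

theorem corollary3p12:
  fixes ar :: "'f \<Rightarrow> nat" and E :: "(('f, nat) trm \<times> ('f, nat) trm) set"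
    and A :: "'a set" and e :: "('f, 'a) trm set \<Rightarrow> 'a"
  assumes "eq_theory ar E"
    and "malcev_theory ar E"
    and "T_algebra ar E A e"
  shows "indiscrete ar E A e \<and> equiv (TT ar E A) (partial_eval ar E A e)"
proof -
  obtain p where "malcev_term ar E p"
    using assms(2) by (auto simp: malcev_theory_iff)
  then have "indiscrete ar E A e"
    using assms(1,3) by (intro indiscrete_if_malcev_term)
  then show ?thesis
    using assms(1,3) by (simp add: partial_eval_eq_kernel equiv_Restr_kernel)
qed

end
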